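(* For all integers $n\ge0$, $nov(n)=\frac12\overline{M}_2(n)$ and $ov(n)=\frac12\overline{M}_2(n)-\overline{M2}_2(n)$.
   Context: An overpartition of $n$ is a partition of $n$ in which the first occurrence of each distinct part may be overlined. $nov(n)$ (resp. $ov(n)$) is the sum, over all overpartitions of $n$, of the non-overlined (resp. overlined) parts. With $(a;q)_\infty=\prod_{j\ge0}(1-aq^j)$, define $\overline{M}(m,n)$, $\overline{M2}(m,n)$ by $\sum_{m,n}\overline{M}(m,n)z^mq^n=\frac{(q^2;q^2)_\infty}{(zq;q)_\infty(q/z;q)_\infty}$ and $\sum_{m,n}\overline{M2}(m,n)z^mq^n=\frac{(-q;q)_\infty(q^2;q^2)_\infty}{(q;q^2)_\infty(zq^2;q^2)_\infty(q^2/z;q^2)_\infty}$ (first and second residual crank counts), and $\overline{M}_2(n)=\sum_m m^2\overline{M}(m,n)$, $\overline{M2}_2(n)=\sum_m m^2\overline{M2}(m,n)$. *)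

theory Defs
  imports "HOL-Computational_Algebra.Computational_Algebra" "HOL-Library.Multiset"
begin

text \<open>Overpartitions of n: a multiset of positive parts summing to n, together with the
  set of part sizes whose first occurrence is overlined.\<close>
definition overpartitions :: "nat \<Rightarrow> (nat multiset \<times> nat set) set" where
  "overpartitions n = {(p, S). (\<forall>x\<in>#p. 0 < x) \<and> sum_mset p = n \<and> S \<subseteq> set_mset p}"

definition ov :: "nat \<Rightarrow> nat" where
  "ov n = (\<Sum>(p, S)\<in>overpartitions n. \<Sum>S)"

definition nov :: "nat \<Rightarrow> nat" where
  "nov n = (\<Sum>(p, S)\<in>overpartitions n. sum_mset p - \<Sum>S)"

text \<open>Two-variable generating functions: formal power series in q whose coefficients are
  formal Laurent series in z (over the rationals).\<close>
type_synonym gf = "rat fls fps"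

definition fps_infprod :: "(nat \<Rightarrow> 'a::comm_ring_1 fps) \<Rightarrow> 'a fps" where
  "fps_infprod f = lim (\<lambda>N. \<Prod>j<N. f j)"

definition qpoch_inf :: "gf \<Rightarrow> nat \<Rightarrow> gf" where
  "qpoch_inf a s = fps_infprod (\<lambda>j. 1 - a * fps_X ^ (s * j))"

definition zvar :: gf where "zvar = fps_const fls_X"

definition GF_M :: gf where
  "GF_M = qpoch_inf (fps_X\<^sup>2) 2 /
     (qpoch_inf (zvar * fps_X) 1 * qpoch_inf (inverse zvar * fps_X) 1)"

definition GF_M2 :: gf where
  "GF_M2 = qpoch_inf (- fps_X) 1 * qpoch_inf (fps_X\<^sup>2) 2 /
     (qpoch_inf fps_X 2 * qpoch_inf (zvar * fps_X\<^sup>2) 2 * qpoch_inf (inverse zvar * fps_X\<^sup>2) 2)"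

definition Mbar :: "int \<Rightarrow> nat \<Rightarrow> rat" where
  "Mbar m n = fls_nth (fps_nth GF_M n) m"

definition M2bar :: "int \<Rightarrow> nat \<Rightarrow> rat" where
  "M2bar m n = fls_nth (fps_nth GF_M2 n) m"

definition Mbar_2 :: "nat \<Rightarrow> rat" where
  "Mbar_2 n = (\<Sum>m | Mbar m n \<noteq> 0. of_int m ^ 2 * Mbar m n)"

definition M2bar_2 :: "nat \<Rightarrow> rat" where
  "M2bar_2 n = (\<Sum>m | M2bar m n \<noteq> 0. of_int m ^ 2 * M2bar m n)"

end

theory Submission
  imports Defs
begin

text \<open>
  Both crank generating functions have the form \<open>F = A(q) / B(z, q)\<close> with
  \<open>B = (z a; q\<^sup>s)\<^sub>\<infinity> (z\<inverse> a; q\<^sup>s)\<^sub>\<infinity>\<close> invariant under \<open>z \<leftrightarrow> z\<inverse>\<close>. Applying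
  \<open>\<theta> = z d/dz\<close> twice to \<open>F B = A\<close> and putting \<open>z = 1\<close>, where all first moments vanish by
  that symmetry, gives \<open>\<Sum>\<^sub>m m\<^sup>2 M(m, n) q\<^sup>n = 2 F(1, q) \<Sum>\<^sub>j w\<^sub>j / (1 - w\<^sub>j)\<^sup>2\<close>
  with \<open>w\<^sub>j = a q\<^sup>s\<^sup>j\<close>, i.e. \<open>2 F(1, q) \<Sum>\<^sub>k q\<^sup>k/(1 - q\<^sup>k)\<^sup>2\<close> for the first crank and
  \<open>2 F(1, q) \<Sum>\<^sub>k q\<^sup>2\<^sup>k/(1 - q\<^sup>2\<^sup>k)\<^sup>2\<close> for the second.

  In both cases \<open>F(1, q)\<close> is the generating function \<open>P(q) = (-q; q)\<^sub>\<infinity> / (q; q)\<^sub>\<infinity>\<close> of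
  overpartitions. Rather than expanding \<open>P\<close>, we identify it through its constant term and its
  logarithmic derivative, which the identity \<open>nov(n) + ov(n) = n p(n)\<close> provides combinatorially:
  removing a part \<open>k\<close> shows that the non-overlined parts \<open>k\<close> contribute \<open>P q\<^sup>k/(1 - q\<^sup>k)\<close> and
  the overlined ones \<open>P q\<^sup>k/(1 + q\<^sup>k) = P (q\<^sup>k/(1 - q\<^sup>k) - 2 q\<^sup>2\<^sup>k/(1 - q\<^sup>2\<^sup>k))\<close>.
  Weighting by \<open>k\<close> and using \<open>\<Sum>\<^bsub>d | t\<^esub> d = \<Sum>\<^bsub>d | t\<^esub> t/d\<close> turns these into the
  crank moment series. Everything is compared modulo \<open>q\<^sup>n\<^sup>+\<^sup>1\<close>, where the infinite
  products can be replaced by finite ones.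
\<close>

unbundle fps_syntax

definition fps_eq_upto :: "nat \<Rightarrow> 'a fps \<Rightarrow> 'a fps \<Rightarrow> bool" where
  "fps_eq_upto n f g \<longleftrightarrow> (\<forall>k\<le>n. f $ k = g $ k)"

lemma fps_eq_uptoD: "fps_eq_upto n f g \<Longrightarrow> k \<le> n \<Longrightarrow> f $ k = g $ k"
  by (simp add: fps_eq_upto_def)

lemma fps_eq_upto_refl [simp]: "fps_eq_upto n f f"
  by (simp add: fps_eq_upto_def)

lemma fps_eq_upto_sym: "fps_eq_upto n f g \<Longrightarrow> fps_eq_upto n g f"
  by (simp add: fps_eq_upto_def)

lemma fps_eq_upto_trans: "fps_eq_upto n f g \<Longrightarrow> fps_eq_upto n g h \<Longrightarrow> fps_eq_upto n f h"
  by (simp add: fps_eq_upto_def)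

lemma fps_eq_upto_diff:
  "fps_eq_upto n f f' \<Longrightarrow> fps_eq_upto n g g' \<Longrightarrow> fps_eq_upto n (f - g) (f' - g')"
  by (simp add: fps_eq_upto_def)

lemma fps_eq_upto_mult:
  fixes f f' g g' :: "'a::comm_ring_1 fps"
  assumes "fps_eq_upto n f f'" "fps_eq_upto n g g'"
  shows "fps_eq_upto n (f * g) (f' * g')"
  using assms by (auto simp: fps_eq_upto_def fps_mult_nth intro!: sum.cong)

lemma fps_eq_upto_inverse:
  fixes f g :: "'a::field fps"
  assumes "fps_eq_upto n f g" "f $ 0 \<noteq> 0"
  shows "fps_eq_upto n (inverse f) (inverse g)"
proof -
  have g0: "g $ 0 \<noteq> 0"
    using assms by (auto simp: fps_eq_upto_def)
  have "fps_eq_upto n ((inverse f * g) * inverse g) ((inverse f * f) * inverse g)"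
    by (intro fps_eq_upto_mult fps_eq_upto_sym[OF assms(1)] fps_eq_upto_refl)
  then show ?thesis
    using assms(2) g0 by (simp add: inverse_mult_eq_1 inverse_mult_eq_1' mult.assoc)
qed

lemma fps_eq_upto_divide:
  fixes f f' g g' :: "'a::field fps"
  assumes "fps_eq_upto n f f'" "fps_eq_upto n g g'" "g' $ 0 \<noteq> 0"
  shows "fps_eq_upto n (f / g) (f' / g')"
proof -
  have "g $ 0 \<noteq> 0"
    using assms by (auto simp: fps_eq_upto_def)
  then show ?thesis
    using assms by (simp add: fps_divide_unit fps_eq_upto_mult fps_eq_upto_inverse)
qed

lemma fps_eq_upto_mult_cancel:
  fixes f g h :: "'a::field fps"
  assumes "fps_eq_upto n (f * h) (g * h)" "h $ 0 \<noteq> 0"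
  shows "fps_eq_upto n f g"
proof -
  have "fps_eq_upto n (f * h * inverse h) (g * h * inverse h)"
    by (rule fps_eq_upto_mult[OF assms(1) fps_eq_upto_refl])
  then show ?thesis
    using assms(2) by (simp add: mult.assoc inverse_mult_eq_1')
qed


section \<open>Truncating infinite products\<close>

lemma fps_mult_nth_eq_left:
  fixes f g :: "'a::comm_ring_1 fps"
  assumes "g $ 0 = 1" "\<And>i. 0 < i \<Longrightarrow> i \<le> k \<Longrightarrow> g $ i = 0"
  shows "(f * g) $ k = f $ k"
proof -
  have "(f * g) $ k = (\<Sum>i\<in>{k}. f $ i * g $ (k - i))"
    unfolding fps_mult_nth by (rule sum.mono_neutral_right) (use assms in auto)
  then show ?thesis
    using assms by simp
qed

lemma fps_prod_nth_stable:
  fixes f :: "nat \<Rightarrow> 'a::comm_ring_1 fps"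
  assumes "\<And>j. f j $ 0 = 1" "\<And>j i. 0 < i \<Longrightarrow> i \<le> j \<Longrightarrow> f j $ i = 0" "k < N"
  shows "(\<Prod>j<N. f j) $ k = (\<Prod>j<Suc k. f j) $ k"
  using assms(3)
proof (induction N)
  case (Suc N)
  show ?case
  proof (cases "k < N")
    case True
    then have "((\<Prod>j<N. f j) * f N) $ k = (\<Prod>j<N. f j) $ k"
      by (intro fps_mult_nth_eq_left) (use assms in auto)
    then show ?thesis
      using Suc True by simp
  qed (use Suc in \<open>simp add: less_Suc_eq\<close>)
qed simp

lemma fps_prod_eq_upto:
  fixes f :: "nat \<Rightarrow> 'a::comm_ring_1 fps"
  assumes "\<And>j. f j $ 0 = 1" "\<And>j i. 0 < i \<Longrightarrow> i \<le> j \<Longrightarrow> f j $ i = 0" "n < N" "n < M"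
  shows "fps_eq_upto n (\<Prod>j<N. f j) (\<Prod>j<M. f j)"
  using fps_prod_nth_stable[OF assms(1,2)] assms(3,4) by (simp add: fps_eq_upto_def)

lemma fps_infprod_eq_upto:
  fixes f :: "nat \<Rightarrow> 'a::comm_ring_1 fps"
  assumes "\<And>j. f j $ 0 = 1" "\<And>j i. 0 < i \<Longrightarrow> i \<le> j \<Longrightarrow> f j $ i = 0" "n < N"
  shows "fps_eq_upto n (fps_infprod f) (\<Prod>j<N. f j)"
proof -
  define L where "L = Abs_fps (\<lambda>k. (\<Prod>j<Suc k. f j) $ k)"
  have "(\<lambda>N. \<Prod>j<N. f j) \<longlonglongrightarrow> L"
  proof (rule tendsto_fpsI)
    fix k
    show "eventually (\<lambda>N. (\<Prod>j<N. f j) $ k = L $ k) sequentially"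
      using eventually_gt_at_top[of k]
      by eventually_elim (simp add: L_def fps_prod_nth_stable[OF assms(1,2)])
  qed
  then have "fps_infprod f = L"
    unfolding fps_infprod_def by (rule limI)
  then show ?thesis
    using fps_prod_nth_stable[OF assms(1,2)] assms(3) by (simp add: fps_eq_upto_def L_def)
qed

lemma fps_prod_nth_0: "(\<Prod>j\<in>A. f j) $ 0 = (\<Prod>j\<in>A. f j $ 0)"
  by (induction A rule: infinite_finite_induct) auto

definition qpoch :: "'a::comm_ring_1 fps \<Rightarrow> nat \<Rightarrow> nat \<Rightarrow> 'a fps" where
  "qpoch a s K = (\<Prod>j<K. 1 - a * fps_X ^ (s * j))"

lemma qpoch_0 [simp]: "qpoch a s 0 = 1"
  by (simp add: qpoch_def)

lemma qpoch_Suc: "qpoch a s (Suc K) = qpoch a s K * (1 - a * fps_X ^ (s * K))"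
  by (simp add: qpoch_def)

lemma qpoch_nth_0 [simp]: "a $ 0 = 0 \<Longrightarrow> qpoch a s K $ 0 = 1"
  by (simp add: qpoch_def fps_prod_nth_0)

lemma qpoch_inf_eq_upto:
  assumes "a $ 0 = 0" "0 < s" "n < N"
  shows "fps_eq_upto n (qpoch_inf a s) (qpoch a s N)"
  unfolding qpoch_inf_def qpoch_def
proof (rule fps_infprod_eq_upto[OF _ _ assms(3)])
  fix j i :: nat
  assume "0 < i" "i \<le> j"
  moreover have "j \<le> s * j"
    using assms(2) by simp
  ultimately have "i < s * j \<or> i = s * j"
    by linarith
  then show "(1 - a * fps_X ^ (s * j)) $ i = 0"
    using assms(1) \<open>0 < i\<close> by (auto simp: fps_X_power_mult_right_nth)
qed (use assms in \<open>simp add: fps_X_power_mult_right_nth\<close>)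


section \<open>Laurent polynomials in \<open>z\<close>: the operator \<open>z d/dz\<close> and evaluation at \<open>z = 1\<close>\<close>

definition fls_theta :: "'a::comm_ring_1 fls \<Rightarrow> 'a fls" where
  "fls_theta f = fls_X * fls_deriv f"

definition fls_finite_supp :: "'a::zero fls \<Rightarrow> bool" where
  "fls_finite_supp f \<longleftrightarrow> finite {m. f $$ m \<noteq> 0}"

text \<open>For infinite support this sum is the junk value \<open>0\<close>; it is the value at \<open>z = 1\<close> only
  for Laurent polynomials.\<close>

definition fls_eval_one :: "'a::comm_monoid_add fls \<Rightarrow> 'a" where
  "fls_eval_one f = (\<Sum>m | f $$ m \<noteq> 0. f $$ m)"

lemma fls_theta_nth [simp]: "fls_theta f $$ m = of_int m * f $$ m"
  by (simp add: fls_theta_def fls_X_times_conv_shift)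

lemma fls_theta_mult: "fls_theta (f * g) = fls_theta f * g + f * fls_theta g"
  by (simp add: fls_theta_def algebra_simps)

lemma fls_theta_sum: "fls_theta (\<Sum>i\<in>A. f i) = (\<Sum>i\<in>A. fls_theta (f i))"
  by (induction A rule: infinite_finite_induct) (simp_all add: fls_theta_def algebra_simps)

lemma fls_eval_one_eq:
  assumes "finite S" "{m. f $$ m \<noteq> 0} \<subseteq> S"
  shows "fls_eval_one f = (\<Sum>m\<in>S. f $$ m)"
  unfolding fls_eval_one_def by (rule sum.mono_neutral_left) (use assms in auto)

lemma fls_finite_supp_subset: "finite S \<Longrightarrow> {m. f $$ m \<noteq> 0} \<subseteq> S \<Longrightarrow> fls_finite_supp f"
  unfolding fls_finite_supp_def using finite_subset by blast

lemma fls_finite_supp_add [simp]: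
  "fls_finite_supp f \<Longrightarrow> fls_finite_supp g \<Longrightarrow> fls_finite_supp (f + g)"
  unfolding fls_finite_supp_def by (rule finite_subset[of _ "{m. f $$ m \<noteq> 0} \<union> {m. g $$ m \<noteq> 0}"]) auto

lemma fls_finite_supp_uminus [simp]: "fls_finite_supp f \<Longrightarrow> fls_finite_supp (- f)"
  by (simp add: fls_finite_supp_def)

lemma fls_finite_supp_diff [simp]:
  "fls_finite_supp f \<Longrightarrow> fls_finite_supp g \<Longrightarrow> fls_finite_supp (f - g)"
  using fls_finite_supp_add[of f "- g"] by simp

lemma fls_finite_supp_theta [simp]: "fls_finite_supp f \<Longrightarrow> fls_finite_supp (fls_theta f)"
  unfolding fls_finite_supp_def by (rule finite_subset[of _ "{m. f $$ m \<noteq> 0}"]) auto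

lemma fls_finite_supp_zero [simp]: "fls_finite_supp 0"
  by (simp add: fls_finite_supp_def)

lemma fls_finite_supp_one [simp]: "fls_finite_supp 1"
  by (rule fls_finite_supp_subset[of "{0}"]) auto

lemma fls_finite_supp_X [simp]: "fls_finite_supp fls_X"
  by (rule fls_finite_supp_subset[of "{1}"]) auto

lemma fls_finite_supp_X_inv [simp]: "fls_finite_supp fls_X_inv"
  by (rule fls_finite_supp_subset[of "{-1}"]) auto

lemma fls_eval_one_add [simp]:
  assumes "fls_finite_supp f" "fls_finite_supp g"
  shows "fls_eval_one (f + g) = fls_eval_one f + fls_eval_one g"
proof -
  define S where "S = {m. f $$ m \<noteq> 0} \<union> {m. g $$ m \<noteq> 0}"
  have S: "finite S"
    using assms by (simp add: S_def fls_finite_supp_def)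
  have "fls_eval_one (f + g) = (\<Sum>m\<in>S. f $$ m) + (\<Sum>m\<in>S. g $$ m)"
    by (subst fls_eval_one_eq[OF S]) (auto simp: S_def sum.distrib)
  also have "\<dots> = fls_eval_one f + fls_eval_one g"
    using fls_eval_one_eq[OF S, of f] fls_eval_one_eq[OF S, of g] by (simp add: S_def)
  finally show ?thesis .
qed

lemma fls_eval_one_uminus [simp]: "fls_eval_one (- f) = - fls_eval_one (f :: 'a::ab_group_add fls)"
  by (simp add: fls_eval_one_def sum_negf)

lemma fls_eval_one_diff [simp]:
  "fls_finite_supp f \<Longrightarrow> fls_finite_supp g \<Longrightarrow>
     fls_eval_one (f - g) = fls_eval_one f - fls_eval_one (g :: 'a::ab_group_add fls)"
  using fls_eval_one_add[of f "- g"] by simp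

lemma fls_eval_one_zero [simp]: "fls_eval_one 0 = 0"
  by (simp add: fls_eval_one_def)

lemma fls_eval_one_one [simp]: "fls_eval_one (1 :: 'a::{comm_monoid_add, zero_neq_one} fls) = 1"
  by (subst fls_eval_one_eq[of "{0}"]) auto

lemma fls_eval_one_X [simp]: "fls_eval_one (fls_X :: 'a::{comm_monoid_add, zero_neq_one} fls) = 1"
  by (subst fls_eval_one_eq[of "{1}"]) auto

lemma fls_eval_one_X_inv [simp]:
  "fls_eval_one (fls_X_inv :: 'a::{comm_monoid_add, zero_neq_one} fls) = 1"
  by (subst fls_eval_one_eq[of "{-1}"]) auto

lemma fls_finite_supp_sum [simp]:
  "(\<And>i. i \<in> A \<Longrightarrow> fls_finite_supp (f i)) \<Longrightarrow> fls_finite_supp (\<Sum>i\<in>A. f i)"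
  by (induction A rule: infinite_finite_induct) auto

lemma fls_eval_one_sum:
  "(\<And>i. i \<in> A \<Longrightarrow> fls_finite_supp (f i)) \<Longrightarrow>
     fls_eval_one (\<Sum>i\<in>A. f i) = (\<Sum>i\<in>A. fls_eval_one (f i))"
  by (induction A rule: infinite_finite_induct) auto

lemma fls_times_nth_finite_supp:
  fixes f g :: "'a::comm_ring_1 fls"
  assumes "finite S" "{m. f $$ m \<noteq> 0} \<subseteq> S"
  shows "(f * g) $$ n = (\<Sum>a\<in>S. f $$ a * g $$ (n - a))"
proof -
  define df dg where "df = fls_subdegree f" and "dg = fls_subdegree g"
  have "(f * g) $$ n = (\<Sum>i=df..n - dg. f $$ i * g $$ (n - i))"
    unfolding df_def dg_def by (rule fls_times_nth(2))
  also have "\<dots> = (\<Sum>i\<in>{df..n-dg} \<union> S. f $$ i * g $$ (n - i))"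
  proof (rule sum.mono_neutral_left)
    show "\<forall>i\<in>{df..n - dg} \<union> S - {df..n - dg}. f $$ i * g $$ (n - i) = 0"
    proof
      fix i
      assume "i \<in> {df..n - dg} \<union> S - {df..n - dg}"
      then have "i < df \<or> n - i < dg"
        by auto
      then show "f $$ i * g $$ (n - i) = 0"
        unfolding df_def dg_def by auto
    qed
  qed (use assms in auto)
  also have "\<dots> = (\<Sum>a\<in>S. f $$ a * g $$ (n - a))"
  proof (rule sum.mono_neutral_right)
    show "\<forall>i\<in>{df..n - dg} \<union> S - S. f $$ i * g $$ (n - i) = 0"
    proof
      fix i
      assume "i \<in> {df..n - dg} \<union> S - S"
      then have "f $$ i = 0"
        using assms(2) by blast
      then show "f $$ i * g $$ (n - i) = 0"
        by simp
    qed
  qed (use assms in auto)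
  finally show ?thesis .
qed

lemma fls_eval_one_mult:
  fixes f g :: "'a::comm_ring_1 fls"
  assumes "fls_finite_supp f" "fls_finite_supp g"
  shows "fls_finite_supp (f * g)" "fls_eval_one (f * g) = fls_eval_one f * fls_eval_one g"
proof -
  define S T where "S = {m. f $$ m \<noteq> 0}" and "T = {m. g $$ m \<noteq> 0}"
  have fin: "finite S" "finite T"
    using assms by (auto simp: S_def T_def fls_finite_supp_def)
  define U where "U = (\<lambda>(a, b). a + b) ` (S \<times> T)"
  have U: "finite U"
    using fin by (simp add: U_def)
  have supp: "{n. (f * g) $$ n \<noteq> 0} \<subseteq> U"
  proof
    fix n
    assume "n \<in> {n. (f * g) $$ n \<noteq> 0}"
    then have "(\<Sum>a\<in>S. f $$ a * g $$ (n - a)) \<noteq> 0"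
      using fls_times_nth_finite_supp[OF fin(1), of f g n] by (simp add: S_def)
    then obtain a where "a \<in> S" "f $$ a * g $$ (n - a) \<noteq> 0"
      by (meson sum.neutral)
    then have "a \<in> S" "n - a \<in> T"
      by (auto simp: T_def)
    then show "n \<in> U"
      unfolding U_def by (auto intro!: image_eqI[of _ _ "(a, n - a)"])
  qed
  then show "fls_finite_supp (f * g)"
    by (rule fls_finite_supp_subset[OF U])
  have shift: "(\<Sum>n\<in>U. g $$ (n - a)) = fls_eval_one g" if "a \<in> S" for a
  proof -
    have "(\<Sum>n\<in>U. g $$ (n - a)) = (\<Sum>b\<in>(\<lambda>n. n - a) ` U. g $$ b)"
      by (subst sum.reindex) (auto simp: inj_on_def)
    also have "\<dots> = fls_eval_one g"
    proof (rule fls_eval_one_eq[symmetric])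
      show "{m. g $$ m \<noteq> 0} \<subseteq> (\<lambda>n. n - a) ` U"
      proof
        fix b
        assume "b \<in> {m. g $$ m \<noteq> 0}"
        then have "a + b \<in> U"
          using that by (auto simp: U_def T_def)
        then show "b \<in> (\<lambda>n. n - a) ` U"
          by (auto intro!: image_eqI[of _ _ "a + b"])
      qed
    qed (use U in simp)
    finally show ?thesis .
  qed
  have "fls_eval_one (f * g) = (\<Sum>n\<in>U. \<Sum>a\<in>S. f $$ a * g $$ (n - a))"
    using fls_eval_one_eq[OF U supp] fls_times_nth_finite_supp[OF fin(1), of f g]
    by (simp add: S_def)
  also have "\<dots> = (\<Sum>a\<in>S. f $$ a * (\<Sum>n\<in>U. g $$ (n - a)))"
    by (subst sum.swap) (simp add: sum_distrib_left)
  also have "\<dots> = (\<Sum>a\<in>S. f $$ a) * fls_eval_one g"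
    by (simp add: shift sum_distrib_right)
  finally show "fls_eval_one (f * g) = fls_eval_one f * fls_eval_one g"
    by (simp add: fls_eval_one_def S_def)
qed

declare fls_eval_one_mult [simp]

lemma fls_eval_one_theta_theta:
  "fls_finite_supp f \<Longrightarrow>
     fls_eval_one (fls_theta (fls_theta f)) = (\<Sum>m | f $$ m \<noteq> 0. of_int m ^ 2 * f $$ m)"
  unfolding fls_finite_supp_def
  by (subst fls_eval_one_eq[of "{m. f $$ m \<noteq> 0}"]) (auto simp: power2_eq_square mult.assoc)


definition theta_z :: "'a::comm_ring_1 fls fps \<Rightarrow> 'a fls fps" where
  "theta_z F = Abs_fps (\<lambda>k. fls_theta (F $ k))"

definition finite_z :: "'a::comm_ring_1 fls fps \<Rightarrow> bool" where
  "finite_z F \<longleftrightarrow> (\<forall>k. fls_finite_supp (F $ k))"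

definition eval_z1 :: "'a::comm_ring_1 fls fps \<Rightarrow> 'a fps" where
  "eval_z1 F = Abs_fps (\<lambda>k. fls_eval_one (F $ k))"

lemma theta_z_nth [simp]: "theta_z F $ k = fls_theta (F $ k)"
  by (simp add: theta_z_def)

lemma eval_z1_nth [simp]: "eval_z1 F $ k = fls_eval_one (F $ k)"
  by (simp add: eval_z1_def)

lemma theta_z_add [simp]: "theta_z (F + G) = theta_z F + theta_z G"
  by (intro fps_ext fls_eqI) (simp add: algebra_simps)

lemma theta_z_diff [simp]: "theta_z (F - G) = theta_z F - theta_z G"
  by (intro fps_ext fls_eqI) (simp add: algebra_simps)

lemma theta_z_uminus [simp]: "theta_z (- F) = - theta_z F"
  by (intro fps_ext fls_eqI) simp

lemma theta_z_zero [simp]: "theta_z 0 = 0"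
  by (intro fps_ext fls_eqI) simp

lemma theta_z_one [simp]: "theta_z 1 = 0"
  by (intro fps_ext fls_eqI) (simp add: fps_one_nth)

lemma theta_z_X [simp]: "theta_z fps_X = 0"
  by (intro fps_ext fls_eqI) (simp add: fps_X_nth)

lemma theta_z_const [simp]: "theta_z (fps_const c) = fps_const (fls_theta c)"
  by (intro fps_ext fls_eqI) simp

lemma theta_z_mult: "theta_z (F * G) = theta_z F * G + F * theta_z G"
  by (rule fps_ext) (simp add: fps_mult_nth fls_theta_sum fls_theta_mult sum.distrib)

lemma theta_z_power_eq_0: "theta_z F = 0 \<Longrightarrow> theta_z (F ^ k) = 0"
  by (induction k) (simp_all add: theta_z_mult)

lemma theta_z_X_power [simp]: "theta_z (fps_X ^ k) = 0"
  by (simp add: theta_z_power_eq_0)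

lemma theta_z_prod_eq_0: "(\<And>j. j \<in> A \<Longrightarrow> theta_z (f j) = 0) \<Longrightarrow> theta_z (\<Prod>j\<in>A. f j) = 0"
  by (induction A rule: infinite_finite_induct) (simp_all add: theta_z_mult)

lemma finite_z_add [simp]: "finite_z F \<Longrightarrow> finite_z G \<Longrightarrow> finite_z (F + G)"
  by (simp add: finite_z_def)

lemma finite_z_diff [simp]: "finite_z F \<Longrightarrow> finite_z G \<Longrightarrow> finite_z (F - G)"
  by (simp add: finite_z_def)

lemma finite_z_uminus [simp]: "finite_z F \<Longrightarrow> finite_z (- F)"
  by (simp add: finite_z_def)

lemma finite_z_one [simp]: "finite_z 1"
  by (simp add: finite_z_def fps_one_nth)

lemma finite_z_X [simp]: "finite_z fps_X"
  by (simp add: finite_z_def fps_X_nth)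

lemma finite_z_const [simp]: "fls_finite_supp c \<Longrightarrow> finite_z (fps_const c)"
  by (simp add: finite_z_def)

lemma finite_z_theta_z [simp]: "finite_z F \<Longrightarrow> finite_z (theta_z F)"
  by (simp add: finite_z_def)

lemma finite_z_mult [simp]: "finite_z F \<Longrightarrow> finite_z G \<Longrightarrow> finite_z (F * G)"
  by (simp add: finite_z_def fps_mult_nth)

lemma finite_z_power [simp]: "finite_z F \<Longrightarrow> finite_z (F ^ k)"
  by (induction k) simp_all

lemma finite_z_prod [simp]: "(\<And>j. j \<in> A \<Longrightarrow> finite_z (f j)) \<Longrightarrow> finite_z (\<Prod>j\<in>A. f j)"
  by (induction A rule: infinite_finite_induct) simp_all

lemma eval_z1_add [simp]: "finite_z F \<Longrightarrow> finite_z G \<Longrightarrow> eval_z1 (F + G) = eval_z1 F + eval_z1 G"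
  by (rule fps_ext) (simp add: finite_z_def)

lemma eval_z1_diff [simp]: "finite_z F \<Longrightarrow> finite_z G \<Longrightarrow> eval_z1 (F - G) = eval_z1 F - eval_z1 G"
  by (rule fps_ext) (simp add: finite_z_def)

lemma eval_z1_uminus [simp]: "eval_z1 (- F) = - eval_z1 F"
  by (rule fps_ext) simp

lemma eval_z1_zero [simp]: "eval_z1 0 = 0"
  by (rule fps_ext) simp

lemma eval_z1_one [simp]: "eval_z1 1 = 1"
  by (rule fps_ext) (simp add: fps_one_nth)

lemma eval_z1_X [simp]: "eval_z1 fps_X = fps_X"
  by (rule fps_ext) (simp add: fps_X_nth)

lemma eval_z1_const [simp]: "eval_z1 (fps_const c) = fps_const (fls_eval_one c)"
  by (rule fps_ext) simp

lemma eval_z1_mult [simp]: "finite_z F \<Longrightarrow> finite_z G \<Longrightarrow> eval_z1 (F * G) = eval_z1 F * eval_z1 G"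
  by (rule fps_ext) (simp add: finite_z_def fps_mult_nth fls_eval_one_sum)

lemma eval_z1_power [simp]: "finite_z F \<Longrightarrow> eval_z1 (F ^ k) = eval_z1 F ^ k"
  by (induction k) simp_all

lemma eval_z1_prod:
  "(\<And>j. j \<in> A \<Longrightarrow> finite_z (f j)) \<Longrightarrow> eval_z1 (\<Prod>j\<in>A. f j) = (\<Prod>j\<in>A. eval_z1 (f j))"
  by (induction A rule: infinite_finite_induct) simp_all

lemma finite_z_inverse:
  fixes G :: "'a::field fls fps"
  assumes "finite_z G" "G $ 0 = 1"
  shows "finite_z (inverse G)"
proof -
  define H where "H = inverse G"
  have HG: "H * G = 1"
    unfolding H_def by (rule inverse_mult_eq_1) (use assms in simp)
  have "fls_finite_supp (H $ k)" for k
  proof (induction k rule: less_induct)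
    case (less k)
    show ?case
    proof (cases k)
      case 0
      then show ?thesis
        using assms by (simp add: H_def)
    next
      case (Suc k')
      have "0 = (H * G) $ k"
        using HG Suc by simp
      also have "\<dots> = H $ k + (\<Sum>i<k. H $ i * G $ (k - i))"
        using assms(2) by (simp add: fps_mult_nth atLeast0AtMost lessThan_Suc_atMost[symmetric])
      finally have "H $ k = - (\<Sum>i<k. H $ i * G $ (k - i))"
        by (simp add: eq_neg_iff_add_eq_0)
      moreover have "fls_finite_supp (\<Sum>i<k. H $ i * G $ (k - i))"
        using less assms(1) by (intro fls_finite_supp_sum fls_eval_one_mult) (auto simp: finite_z_def)
      ultimately show ?thesis
        by simp
    qed
  qed
  then show ?thesis
    by (simp add: finite_z_def H_def)
qed

lemma finite_z_divide:
  fixes F G :: "'a::field fls fps"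
  shows "finite_z F \<Longrightarrow> finite_z G \<Longrightarrow> G $ 0 = 1 \<Longrightarrow> finite_z (F / G)"
  by (simp add: fps_divide_unit finite_z_inverse)

lemma eval_z1_nonzero:
  assumes "F $ 0 = 1"
  shows "eval_z1 F \<noteq> 0"
proof
  assume "eval_z1 F = 0"
  then have "eval_z1 F $ 0 = 0"
    by simp
  with assms show False
    by simp
qed

lemma eval_z1_divide:
  fixes F G :: "'a::field fls fps"
  assumes "finite_z F" "finite_z G" "G $ 0 = 1"
  shows "eval_z1 (F / G) = eval_z1 F / eval_z1 G"
proof -
  have "F / G * G = F"
    using assms(3) by (simp add: fps_divide_unit mult.assoc inverse_mult_eq_1)
  moreover have "eval_z1 (F / G * G) = eval_z1 (F / G) * eval_z1 G"
    by (rule eval_z1_mult[OF finite_z_divide[OF assms] assms(2)])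
  moreover have "eval_z1 G \<noteq> 0"
    using assms(3) by (rule eval_z1_nonzero)
  ultimately show ?thesis
    using nonzero_mult_div_cancel_right[of "eval_z1 G" "eval_z1 (F / G)"] by simp
qed

lemma zvar_inverse: "inverse zvar = fps_const fls_X_inv"
  by (simp add: zvar_def fps_const_inverse fls_inverse_X)

lemma theta_z_zvar [simp]: "theta_z zvar = zvar"
  by (simp add: zvar_def fls_theta_def)

lemma theta_z_zvar_inverse [simp]: "theta_z (inverse zvar) = - inverse zvar"
proof -
  have "fls_theta fls_X_inv = - (fls_X_inv :: rat fls)"
    by (rule fls_eqI) simp
  then show ?thesis
    by (simp add: zvar_inverse fps_const_neg)
qed

lemma finite_z_zvar [simp]: "finite_z zvar" "finite_z (inverse zvar)"
  by (simp add: zvar_def) (simp add: zvar_inverse)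

lemma eval_z1_zvar [simp]: "eval_z1 zvar = 1" "eval_z1 (inverse zvar) = 1"
  by (simp add: zvar_def) (simp add: zvar_inverse)


section \<open>Second moments of quotients by \<open>z \<leftrightarrow> z\<inverse>\<close> symmetric products\<close>

lemma eval_z1_theta_z_mult:
  "finite_z F \<Longrightarrow> finite_z G \<Longrightarrow>
     eval_z1 (theta_z (F * G)) = eval_z1 (theta_z F) * eval_z1 G + eval_z1 F * eval_z1 (theta_z G)"
  by (simp add: theta_z_mult)

lemma eval_z1_theta_z2_mult:
  assumes "finite_z F" "finite_z G" "eval_z1 (theta_z F) = 0" "eval_z1 (theta_z G) = 0"
  shows "eval_z1 (theta_z (theta_z (F * G))) =
           eval_z1 (theta_z (theta_z F)) * eval_z1 G + eval_z1 F * eval_z1 (theta_z (theta_z G))"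
  using assms
  by (simp only: theta_z_mult theta_z_add eval_z1_add eval_z1_mult finite_z_mult finite_z_add
      finite_z_theta_z) simp

lemma eval_z1_theta_z2_divide:
  fixes A B :: "'a::field fls fps"
  assumes A: "finite_z A" "theta_z A = 0"
    and B: "finite_z B" "B $ 0 = 1" "eval_z1 (theta_z B) = 0"
      "eval_z1 (theta_z (theta_z B)) = - 2 * eval_z1 B * S"
  shows "eval_z1 (theta_z (theta_z (A / B))) = 2 * eval_z1 (A / B) * S"
proof -
  define F where "F = A / B"
  have F: "finite_z F" "F * B = A"
    using A B by (simp add: F_def finite_z_divide)
      (simp add: F_def B fps_divide_unit mult.assoc inverse_mult_eq_1)
  have "eval_z1 (theta_z F) * eval_z1 B = 0"
    using eval_z1_theta_z_mult[OF F(1) B(1)] A B F by simp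
  then have F1: "eval_z1 (theta_z F) = 0"
    using eval_z1_nonzero[OF B(2)] by simp
  have "0 = eval_z1 (theta_z (theta_z (F * B)))"
    using A F by simp
  also have "\<dots> = eval_z1 B * (eval_z1 (theta_z (theta_z F)) - 2 * eval_z1 F * S)"
    by (subst eval_z1_theta_z2_mult[OF F(1) B(1) F1 B(3)]) (simp add: B(4) algebra_simps)
  finally show ?thesis
    using eval_z1_nonzero[OF B(2)] by (simp add: F_def)
qed

lemma theta_z_qpoch [simp]: "theta_z a = 0 \<Longrightarrow> theta_z (qpoch a s K) = 0"
  unfolding qpoch_def by (rule theta_z_prod_eq_0) (simp add: theta_z_mult theta_z_power_eq_0)

lemma finite_z_qpoch [simp]: "finite_z a \<Longrightarrow> finite_z (qpoch a s K)"
  by (simp add: qpoch_def)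

lemma eval_z1_qpoch [simp]: "finite_z a \<Longrightarrow> eval_z1 (qpoch a s K) = qpoch (eval_z1 a) s K"
  by (simp add: qpoch_def eval_z1_prod)

text \<open>In \<open>(z a; q\<^sup>s)\<^sub>N (z\<inverse> a; q\<^sup>s)\<^sub>N\<close> with \<open>a\<close> free of \<open>z\<close>, the \<open>j\<close>-th pair of factors
  contributes \<open>-2 w\<^sub>j\<close>, \<open>w\<^sub>j = a q\<^sup>s\<^sup>j\<close>, to the second moment at \<open>z = 1\<close>, i.e. \<open>-2 H\<^sub>j\<close> times its
  value \<open>(1 - w\<^sub>j)\<^sup>2\<close> there.\<close>

lemma eval_z1_theta_z_qpoch_pair:
  fixes a :: gf and H :: "nat \<Rightarrow> rat fps" and N :: nat
  assumes a: "theta_z a = 0" "finite_z a" "eval_z1 a = b"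
    and H: "\<And>j. H j * (1 - b * fps_X ^ (s * j))\<^sup>2 = b * fps_X ^ (s * j)"
  defines "B \<equiv> qpoch (zvar * a) s N * qpoch (inverse zvar * a) s N"
  shows "eval_z1 (theta_z B) = 0"
    and "eval_z1 (theta_z (theta_z B)) = - 2 * eval_z1 B * (\<Sum>j<N. H j)"
proof -
  define w where "w j = a * fps_X ^ (s * j)" for j
  have w: "theta_z (w j) = 0" "finite_z (w j)" for j
    using a by (simp_all add: w_def theta_z_mult theta_z_power_eq_0)
  define P where "P K = qpoch (zvar * a) s K * qpoch (inverse zvar * a) s K" for K
  have "eval_z1 (theta_z (P K)) = 0 \<and>
    eval_z1 (theta_z (theta_z (P K))) = - 2 * eval_z1 (P K) * (\<Sum>j<K. H j)" for K
  proof (induction K)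
    case (Suc K)
    define c where "c = (1 - zvar * w K) * (1 - inverse zvar * w K)"
    have fin: "finite_z (P K)" "finite_z c"
      using a by (simp_all add: P_def c_def w)
    have Tc: "theta_z c = inverse zvar * w K - zvar * w K"
      by (simp add: c_def theta_z_mult w algebra_simps)
    have c1: "eval_z1 (theta_z c) = 0"
      by (simp add: Tc w)
    have c2: "eval_z1 (theta_z (theta_z c)) = - 2 * eval_z1 c * H K"
    proof -
      have "eval_z1 (theta_z (theta_z c)) = - 2 * eval_z1 (w K)"
        by (simp add: Tc theta_z_mult w)
      also have "\<dots> = - 2 * (H K * (1 - eval_z1 (w K))\<^sup>2)"
        using H[of K] a(2,3) by (simp add: w_def)
      also have "(1 - eval_z1 (w K))\<^sup>2 = eval_z1 c"
        by (simp add: c_def w power2_eq_square)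
      finally show ?thesis
        by (simp add: mult_ac)
    qed
    have "P (Suc K) = P K * c"
      by (simp add: P_def c_def w_def qpoch_Suc mult_ac)
    then show ?case
      using Suc fin c1 c2 by (simp add: eval_z1_theta_z_mult eval_z1_theta_z2_mult algebra_simps)
  qed (simp add: P_def)
  then show "eval_z1 (theta_z B) = 0"
    and "eval_z1 (theta_z (theta_z B)) = - 2 * eval_z1 B * (\<Sum>j<N. H j)"
    by (simp_all add: B_def P_def)
qed

lemma second_moment_eq_eval_z1:
  "finite_z F \<Longrightarrow>
     (\<Sum>m | F $ n $$ m \<noteq> 0. of_int m ^ 2 * F $ n $$ m) = eval_z1 (theta_z (theta_z F)) $ n"
  by (simp add: fls_eval_one_theta_theta finite_z_def)


section \<open>Lambert series\<close>

definition lambert :: "nat \<Rightarrow> 'a::comm_ring_1 fps" where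
  "lambert a = Abs_fps (\<lambda>t. if a dvd t \<and> 0 < t then 1 else 0)"

definition lambert_sq :: "nat \<Rightarrow> 'a::field_char_0 fps" where
  "lambert_sq a = Abs_fps (\<lambda>t. if a dvd t then of_nat t / of_nat a else 0)"

lemma lambert_nth: "lambert a $ t = (if a dvd t \<and> 0 < t then 1 else 0)"
  by (simp add: lambert_def)

lemma lambert_sq_nth: "lambert_sq a $ t = (if a dvd t then of_nat t / of_nat a else 0)"
  by (simp add: lambert_sq_def)

lemma fps_mult_one_minus_X_power_nth:
  fixes f :: "'a::comm_ring_1 fps"
  shows "(f * (1 - fps_X ^ a)) $ t = f $ t - (if a \<le> t then f $ (t - a) else 0)"
  by (simp add: algebra_simps fps_X_power_mult_right_nth)

lemma lambert_mult_one_minus_X_power: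
  assumes "0 < a"
  shows "lambert a * (1 - fps_X ^ a) = (fps_X ^ a :: 'a::comm_ring_1 fps)"
proof (rule fps_ext)
  fix t
  show "(lambert a * (1 - fps_X ^ a)) $ t = (fps_X ^ a :: 'a fps) $ t"
  proof (cases "a \<le> t")
    case True
    then have "a dvd t - a \<longleftrightarrow> a dvd t"
      by (simp add: dvd_diff_nat dvd_minus_self)
    then show ?thesis
      using True assms by (auto simp: fps_mult_one_minus_X_power_nth lambert_nth)
  qed (auto simp: fps_mult_one_minus_X_power_nth lambert_nth dest: dvd_imp_le)
qed

lemma lambert_sq_mult_one_minus_X_power:
  assumes "0 < a"
  shows "lambert_sq a * (1 - fps_X ^ a) = (lambert a :: 'a::field_char_0 fps)"
proof (rule fps_ext)
  fix t
  show "(lambert_sq a * (1 - fps_X ^ a)) $ t = (lambert a :: 'a fps) $ t"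
  proof (cases "a \<le> t")
    case True
    then have "a dvd t - a \<longleftrightarrow> a dvd t"
      by (simp add: dvd_diff_nat dvd_minus_self)
    moreover have "of_nat t / of_nat a - of_nat (t - a) / of_nat a = (1 :: 'a)"
      using True assms by (simp add: of_nat_diff field_simps)
    ultimately show ?thesis
      using True assms by (auto simp: fps_mult_one_minus_X_power_nth lambert_sq_nth lambert_nth)
  qed (auto simp: fps_mult_one_minus_X_power_nth lambert_sq_nth lambert_nth dest: dvd_imp_le)
qed

lemma lambert_sq_mult_one_minus_X_power_sq:
  assumes "0 < a"
  shows "lambert_sq a * (1 - fps_X ^ a)\<^sup>2 = (fps_X ^ a :: 'a::field_char_0 fps)"
  using assms
  by (simp add: power2_eq_square lambert_sq_mult_one_minus_X_power lambert_mult_one_minus_X_power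
      flip: mult.assoc)

definition lambert_sum :: "nat \<Rightarrow> nat \<Rightarrow> 'a::comm_ring_1 fps" where
  "lambert_sum d L = (\<Sum>k=1..L. of_nat k * lambert (d * k))"

lemma lambert_sum_nth_0 [simp]: "lambert_sum d L $ 0 = 0"
  by (simp add: lambert_sum_def fps_sum_nth lambert_nth)

definition lambert_sq_sum :: "nat \<Rightarrow> nat \<Rightarrow> 'a::field_char_0 fps" where
  "lambert_sq_sum d L = (\<Sum>k=1..L. lambert_sq (d * k))"

lemma fps_of_nat_mult_nth [simp]: "(of_nat c * f) $ t = of_nat c * f $ t"
  by (simp flip: fps_of_nat)

lemma fps_numeral_mult_nth [simp]: "(numeral c * f) $ t = numeral c * f $ t"
  by (simp add: fps_numeral_fps_const)

lemma lambert_nth_eq_0: "t < a \<Longrightarrow> lambert a $ t = 0"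
  by (auto simp: lambert_nth dest: dvd_imp_le)

lemma lambert_sum_eq_upto:
  assumes "0 < d" "n \<le> L" "n \<le> L'"
  shows "fps_eq_upto n (lambert_sum d L) (lambert_sum d L' :: 'a::comm_ring_1 fps)"
proof -
  have "(lambert_sum d M :: 'a fps) $ t = (\<Sum>k=1..n. of_nat k * lambert (d * k) $ t)"
    if "n \<le> M" "t \<le> n" for M t
  proof -
    have "lambert (d * k) $ t = (0 :: 'a)" if "n < k" for k
    proof (rule lambert_nth_eq_0)
      have "k \<le> d * k"
        using assms(1) by simp
      then show "t < d * k"
        using that \<open>t \<le> n\<close> by linarith
    qed
    then show ?thesis
      unfolding lambert_sum_def fps_sum_nth fps_of_nat_mult_nth
      by (intro sum.mono_neutral_right) (use \<open>n \<le> M\<close> in auto)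
  qed
  then show ?thesis
    using assms by (simp add: fps_eq_upto_def)
qed

lemma sum_divisors_symmetric:
  fixes s :: nat
  assumes "0 < s"
  shows "(\<Sum>k | k dvd s. of_nat k :: 'a::field_char_0) = (\<Sum>k | k dvd s. of_nat s / of_nat k)"
proof -
  have inv: "s div (s div k) = k \<and> s div k \<in> {k. k dvd s} \<and> of_nat s / of_nat (s div k) = (of_nat k :: 'a)"
    if k: "k \<in> {k. k dvd s}" for k
  proof -
    obtain m where m: "s = k * m"
      using k by auto
    then have "0 < k" "0 < m"
      using assms by auto
    then show ?thesis
      using m by auto
  qed
  show ?thesis
    by (rule sum.reindex_bij_witness[where i = "\<lambda>k. s div k" and j = "\<lambda>k. s div k"])
      (use inv in auto)
qed

lemma sum_atLeastAtMost_if_dvd: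
  fixes s L :: nat
  assumes "0 < s" "s \<le> L"
  shows "(\<Sum>k=1..L. if k dvd s then f k else 0) = (\<Sum>k | k dvd s. f k)"
proof -
  have "k \<in> {1..L}" if "k dvd s" for k
  proof -
    have "k \<le> s" "k \<noteq> 0"
      using dvd_imp_le[OF that assms(1)] that assms(1) by auto
    then show ?thesis
      using assms(2) by auto
  qed
  then have "{1..L} \<inter> {k. k dvd s} = {k. k dvd s}"
    by blast
  moreover have "(\<Sum>k=1..L. if k dvd s then f k else 0) = sum f ({1..L} \<inter> {k. k dvd s})"
    by (simp add: sum.inter_restrict)
  ultimately show ?thesis
    by simp
qed

text \<open>Coefficientwise this is \<open>\<Sum>\<^bsub>k | s\<^esub> k = \<Sum>\<^bsub>k | s\<^esub> s/k\<close> for \<open>t = d s\<close>.\<close>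

lemma lambert_sum_eq_upto_lambert_sq_sum:
  assumes "0 < d" "n < L" "n < L'"
  shows "fps_eq_upto n (lambert_sum d L) (lambert_sq_sum d L' :: 'a::field_char_0 fps)"
  unfolding fps_eq_upto_def
proof (intro allI impI)
  fix t
  assume "t \<le> n"
  have l: "(lambert_sum d L :: 'a fps) $ t = (\<Sum>k=1..L. if d * k dvd t \<and> 0 < t then of_nat k else 0)"
    unfolding lambert_sum_def fps_sum_nth
    by (intro sum.cong) (simp_all add: lambert_nth)
  have r: "(lambert_sq_sum d L' :: 'a fps) $ t =
      (\<Sum>k=1..L'. if d * k dvd t then of_nat t / of_nat (d * k) else 0)"
    unfolding lambert_sq_sum_def fps_sum_nth by (simp add: lambert_sq_nth)
  show "(lambert_sum d L :: 'a fps) $ t = lambert_sq_sum d L' $ t"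
  proof (cases "d dvd t \<and> 0 < t")
    case False
    then show ?thesis
      unfolding l r by (intro trans[OF sum.neutral sum.neutral[symmetric]]) (auto dest: dvd_mult_left)
  next
    case True
    then obtain s where s: "t = d * s" "0 < s"
      by (auto elim!: dvdE)
    have "s \<le> d * s"
      using assms(1) by simp
    then have "s \<le> n"
      using \<open>t \<le> n\<close> s by linarith
    have "(lambert_sum d L :: 'a fps) $ t = (\<Sum>k=1..L. if k dvd s then of_nat k else 0)"
      unfolding l using s assms(1) by simp
    also have "\<dots> = (\<Sum>k | k dvd s. of_nat s / of_nat k)"
      using sum_atLeastAtMost_if_dvd[of s L "of_nat :: nat \<Rightarrow> 'a"] sum_divisors_symmetric[of s]
        s \<open>s \<le> n\<close> assms by simp
    also have "\<dots> = (\<Sum>k=1..L'. if k dvd s then of_nat s / of_nat k else 0)"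
      using sum_atLeastAtMost_if_dvd[of s L' "\<lambda>k. of_nat s / of_nat k :: 'a"]
        s \<open>s \<le> n\<close> assms by simp
    also have "\<dots> = lambert_sq_sum d L' $ t"
      unfolding r using s assms(1) by (intro sum.cong) simp_all
    finally show ?thesis .
  qed
qed


section \<open>The crank moments as \<open>q\<close>-series\<close>

lemma GF_M_eq_upto:
  assumes "n < K" "n < N"
  shows "fps_eq_upto n GF_M
    (qpoch (fps_X\<^sup>2) 2 K / (qpoch (zvar * fps_X) 1 N * qpoch (inverse zvar * fps_X) 1 N))"
  unfolding GF_M_def using assms
  by (intro fps_eq_upto_divide fps_eq_upto_mult qpoch_inf_eq_upto) simp_all

lemma GF_M2_eq_upto:
  assumes "n < K"
  shows "fps_eq_upto n GF_M2
    (qpoch (- fps_X) 1 K * qpoch (fps_X\<^sup>2) 2 K /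
      (qpoch fps_X 2 K * qpoch (zvar * fps_X\<^sup>2) 2 K * qpoch (inverse zvar * fps_X\<^sup>2) 2 K))"
  unfolding GF_M2_def using assms
  by (intro fps_eq_upto_divide fps_eq_upto_mult qpoch_inf_eq_upto) simp_all

lemma Mbar_2_eq:
  assumes "n < K" "n < N"
  shows "Mbar_2 n = 2 * (qpoch (fps_X\<^sup>2) 2 K / (qpoch fps_X 1 N)\<^sup>2 * lambert_sq_sum 1 N) $ n"
proof -
  define A B where "A = qpoch (fps_X\<^sup>2 :: gf) 2 K"
    and "B = qpoch (zvar * fps_X) 1 N * qpoch (inverse zvar * fps_X) 1 N"
  have H: "lambert_sq (Suc j) * (1 - fps_X * fps_X ^ (1 * j))\<^sup>2 = (fps_X * fps_X ^ (1 * j) :: rat fps)"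
    for j
    using lambert_sq_mult_one_minus_X_power_sq[of "Suc j"] by simp
  have S: "lambert_sq_sum 1 N = (\<Sum>j<N. lambert_sq (Suc j) :: rat fps)"
    unfolding lambert_sq_sum_def by (simp add: sum_bounds_lt_plus1)
  have B: "eval_z1 (theta_z B) = 0"
    "eval_z1 (theta_z (theta_z B)) = - 2 * eval_z1 B * lambert_sq_sum 1 N"
    unfolding B_def S by (rule eval_z1_theta_z_qpoch_pair[OF _ _ _ H]; simp)+
  have fin: "finite_z A" "finite_z B" "B $ 0 = 1"
    by (simp_all add: A_def B_def)
  have "Mbar_2 n = (\<Sum>m | (A / B) $ n $$ m \<noteq> 0. of_int m ^ 2 * (A / B) $ n $$ m)"
    using fps_eq_uptoD[OF GF_M_eq_upto[OF assms], of n]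
    by (simp add: Mbar_2_def Mbar_def A_def B_def)
  also have "\<dots> = eval_z1 (theta_z (theta_z (A / B))) $ n"
    using fin by (simp add: second_moment_eq_eval_z1 finite_z_divide)
  also have "\<dots> = (2 * eval_z1 (A / B) * lambert_sq_sum 1 N) $ n"
    using fin B by (subst eval_z1_theta_z2_divide) (simp_all add: A_def)
  also have "\<dots> = 2 * (qpoch (fps_X\<^sup>2) 2 K / (qpoch fps_X 1 N)\<^sup>2 * lambert_sq_sum 1 N) $ n"
    using fin by (simp add: eval_z1_divide A_def B_def power2_eq_square fps_numeral_fps_const
        mult.assoc)
  finally show ?thesis .
qed

lemma M2bar_2_eq:
  assumes "n < K"
  shows "M2bar_2 n = 2 * (qpoch (- fps_X) 1 K * qpoch (fps_X\<^sup>2) 2 K /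
    (qpoch fps_X 2 K * (qpoch (fps_X\<^sup>2) 2 K)\<^sup>2) * lambert_sq_sum 2 K) $ n"
proof -
  define A C P where "A = qpoch (- fps_X :: gf) 1 K * qpoch (fps_X\<^sup>2) 2 K"
    and "C = qpoch (fps_X :: gf) 2 K"
    and "P = qpoch (zvar * fps_X\<^sup>2) 2 K * qpoch (inverse zvar * fps_X\<^sup>2) 2 K"
  define S :: "rat fps" where "S = lambert_sq_sum 2 K"
  have S: "S = (\<Sum>j<K. lambert_sq (2 * Suc j))"
    unfolding S_def lambert_sq_sum_def by (rule sum_bounds_lt_plus1[symmetric])
  have H: "lambert_sq (2 * Suc j) * (1 - fps_X\<^sup>2 * fps_X ^ (2 * j))\<^sup>2 =
    (fps_X\<^sup>2 * fps_X ^ (2 * j) :: rat fps)" for j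
  proof -
    have "(fps_X\<^sup>2 * fps_X ^ (2 * j) :: rat fps) = fps_X ^ (2 * Suc j)"
      by (simp flip: power_add)
    then show ?thesis
      by (simp only:) (rule lambert_sq_mult_one_minus_X_power_sq, simp)
  qed
  have P: "eval_z1 (theta_z P) = 0" "eval_z1 (theta_z (theta_z P)) = - 2 * eval_z1 P * S"
    unfolding P_def S by (rule eval_z1_theta_z_qpoch_pair[OF _ _ _ H]; simp)+
  have fin: "finite_z A" "finite_z C" "finite_z P" "theta_z C = 0" "(C * P) $ 0 = 1"
    by (simp_all add: A_def C_def P_def)
  have CP: "eval_z1 (theta_z (C * P)) = 0"
    "eval_z1 (theta_z (theta_z (C * P))) = - 2 * eval_z1 (C * P) * S"
    using fin P by (simp_all add: eval_z1_theta_z_mult eval_z1_theta_z2_mult mult_ac)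
  have "M2bar_2 n = (\<Sum>m | (A / (C * P)) $ n $$ m \<noteq> 0. of_int m ^ 2 * (A / (C * P)) $ n $$ m)"
    using fps_eq_uptoD[OF GF_M2_eq_upto[OF assms], of n]
    by (simp add: M2bar_2_def M2bar_def A_def C_def P_def mult.assoc)
  also have "\<dots> = eval_z1 (theta_z (theta_z (A / (C * P)))) $ n"
    using fin by (simp add: second_moment_eq_eval_z1 finite_z_divide)
  also have "\<dots> = (2 * eval_z1 (A / (C * P)) * S) $ n"
    using fin CP by (subst eval_z1_theta_z2_divide) (simp_all add: A_def theta_z_mult)
  also have "\<dots> = 2 * (qpoch (- fps_X) 1 K * qpoch (fps_X\<^sup>2) 2 K /
      (qpoch fps_X 2 K * (qpoch (fps_X\<^sup>2) 2 K)\<^sup>2) * lambert_sq_sum 2 K) $ n"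
    using fin by (simp add: eval_z1_divide A_def C_def P_def S_def power2_eq_square
        fps_numeral_fps_const mult.assoc)
  finally show ?thesis .
qed


section \<open>Counting parts of overpartitions\<close>

definition pbar :: "nat \<Rightarrow> nat" where
  "pbar n = card (overpartitions n)"

definition overlined_count :: "nat \<Rightarrow> nat \<Rightarrow> nat" where
  "overlined_count k n = card {x \<in> overpartitions n. k \<in> snd x}"

definition nonoverlined_mult :: "nat multiset \<times> nat set \<Rightarrow> nat \<Rightarrow> nat" where
  "nonoverlined_mult x k = count (fst x) k - (if k \<in> snd x then 1 else 0)"

definition nonoverlined_count :: "nat \<Rightarrow> nat \<Rightarrow> nat" where
  "nonoverlined_count k n = (\<Sum>x\<in>overpartitions n. nonoverlined_mult x k)"

lemma mem_overpartitions_iff: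
  "(p, S) \<in> overpartitions n \<longleftrightarrow> (\<forall>x\<in>#p. 0 < x) \<and> sum_mset p = n \<and> S \<subseteq> set_mset p"
  by (simp add: overpartitions_def)

lemma member_le_sum_mset: "x \<in># (p :: nat multiset) \<Longrightarrow> x \<le> sum_mset p"
  using sum_mset.remove[of x p] by simp

lemma size_le_sum_mset: "(\<forall>x\<in>#p. 0 < x) \<Longrightarrow> size p \<le> sum_mset (p :: nat multiset)"
  by (induction p) auto

lemma sum_mset_eq_sum_count:
  assumes "finite A" "set_mset p \<subseteq> A"
  shows "sum_mset (p :: nat multiset) = (\<Sum>k\<in>A. k * count p k)"
  using assms(2)
proof (induction p)
  case (add x p)
  then have "x \<in> A"
    by simp
  have "(\<Sum>k\<in>A. k * count (add_mset x p) k) = (\<Sum>k\<in>A. k * count p k + (if k = x then k else 0))"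
    by (rule sum.cong) auto
  also have "\<dots> = (\<Sum>k\<in>A. k * count p k) + x"
    using \<open>x \<in> A\<close> assms(1) by (simp add: sum.distrib)
  finally show ?case
    using add by simp
qed simp

lemma overpartitions_parts: "(p, S) \<in> overpartitions n \<Longrightarrow> set_mset p \<subseteq> {1..n}"
  by (auto simp: mem_overpartitions_iff Suc_le_eq member_le_sum_mset)

lemma overpartitions_overlined: "(p, S) \<in> overpartitions n \<Longrightarrow> S \<subseteq> {1..n}"
  using overpartitions_parts[of p S n] by (auto simp: mem_overpartitions_iff)

lemma finite_overpartitions: "finite (overpartitions n)"
proof (rule finite_subset)
  show "overpartitions n \<subseteq> (\<Union>s\<in>{0..n}. multisets_of_size {1..n} s) \<times> Pow {1..n}"
  proof
    fix x
    assume x: "x \<in> overpartitions n"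
    obtain p S where [simp]: "x = (p, S)"
      by fastforce
    show "x \<in> (\<Union>s\<in>{0..n}. multisets_of_size {1..n} s) \<times> Pow {1..n}"
      using x overpartitions_parts[of p S n] overpartitions_overlined[of p S n]
        size_le_sum_mset[of p]
      by (auto simp: multisets_of_size_def mem_overpartitions_iff)
  qed
qed auto

lemma overpartitions_0: "overpartitions 0 = {({#}, {})}"
proof -
  have "p = {#} \<and> S = {}" if "(p, S) \<in> overpartitions 0" for p S
    using overpartitions_parts[OF that] that by (auto simp: mem_overpartitions_iff)
  then show ?thesis
    by (auto simp: overpartitions_def)
qed

lemma pbar_0: "pbar 0 = 1"
  by (simp add: pbar_def overpartitions_0)

lemma overlined_count_eq_0:
  assumes "n < k"
  shows "overlined_count k n = 0"
proof -
  have "k \<notin> snd x" if "x \<in> overpartitions n" for x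
    using that assms overpartitions_overlined[of "fst x" "snd x" n] by auto
  then have empty: "{x \<in> overpartitions n. k \<in> snd x} = {}"
    by blast
  show ?thesis
    unfolding overlined_count_def empty by simp
qed

lemma nonoverlined_count_eq_0:
  assumes "n < k"
  shows "nonoverlined_count k n = 0"
proof -
  have "nonoverlined_mult x k = 0" if "x \<in> overpartitions n" for x
  proof -
    obtain p S where x: "x = (p, S)"
      by fastforce
    have "k \<notin># p"
      using that assms overpartitions_parts[of p S n] x by auto
    then show ?thesis
      by (simp add: nonoverlined_mult_def x not_in_iff)
  qed
  then show ?thesis
    by (simp add: nonoverlined_count_def)
qed

text \<open>Removing the overlined part \<open>k\<close> is a bijection onto the overpartitions of \<open>n - k\<close> in which
  \<open>k\<close> is not overlined.\<close>

lemma overlined_count_rec: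
  assumes "0 < k" "k \<le> n"
  shows "overlined_count k n + overlined_count k (n - k) = pbar (n - k)"
proof -
  define f where "f = (\<lambda>(p :: nat multiset, S :: nat set). (p - {#k#}, S - {k}))"
  define g where "g = (\<lambda>(p :: nat multiset, S :: nat set). (add_mset k p, insert k S))"
  have "bij_betw f {x \<in> overpartitions n. k \<in> snd x} {y \<in> overpartitions (n - k). k \<notin> snd y}"
  proof (rule bij_betw_byWitness[where f' = g])
    show "\<forall>a\<in>{x \<in> overpartitions n. k \<in> snd x}. g (f a) = a"
    proof
      fix a
      assume "a \<in> {x \<in> overpartitions n. k \<in> snd x}"
      then obtain p S where a: "a = (p, S)" "(p, S) \<in> overpartitions n" "k \<in> S"
        by (cases a) auto
      then have "k \<in># p"
        by (auto simp: mem_overpartitions_iff)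
      then show "g (f a) = a"
        using a by (auto simp: f_def g_def)
    qed
    show "\<forall>a\<in>{y \<in> overpartitions (n - k). k \<notin> snd y}. f (g a) = a"
      by (auto simp: f_def g_def)
    show "f ` {x \<in> overpartitions n. k \<in> snd x} \<subseteq> {y \<in> overpartitions (n - k). k \<notin> snd y}"
    proof
      fix y
      assume "y \<in> f ` {x \<in> overpartitions n. k \<in> snd x}"
      then obtain p S where a: "(p, S) \<in> overpartitions n" "k \<in> S" "y = f (p, S)"
        by auto
      then have "k \<in># p"
        by (auto simp: mem_overpartitions_iff)
      then obtain p' where "p = add_mset k p'"
        by (blast dest: multi_member_split)
      then show "y \<in> {y \<in> overpartitions (n - k). k \<notin> snd y}"
        using a by (auto simp: f_def mem_overpartitions_iff)
    qed
    show "g ` {y \<in> overpartitions (n - k). k \<notin> snd y} \<subseteq> {x \<in> overpartitions n. k \<in> snd x}"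
      using assms by (auto simp: g_def mem_overpartitions_iff)
  qed
  then have "overlined_count k n = card {y \<in> overpartitions (n - k). k \<notin> snd y}"
    unfolding overlined_count_def by (rule bij_betw_same_card)
  moreover have "card {y \<in> overpartitions (n - k). k \<in> snd y} +
      card {y \<in> overpartitions (n - k). k \<notin> snd y} = pbar (n - k)"
    unfolding pbar_def using finite_overpartitions
    by (subst card_Un_disjoint[symmetric]) (auto intro: arg_cong[where f = card])
  ultimately show ?thesis
    by (simp add: overlined_count_def)
qed

text \<open>Adding a non-overlined part \<open>k\<close> is a bijection onto the overpartitions of \<open>n\<close> having at
  least one non-overlined part \<open>k\<close>, and it raises their number by one.\<close>

lemma nonoverlined_count_rec:
  assumes "0 < k" "k \<le> n"
  shows "nonoverlined_count k n = nonoverlined_count k (n - k) + pbar (n - k)"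
proof -
  define g where "g = (\<lambda>(p :: nat multiset, S :: nat set). (add_mset k p, S))"
  define f where "f = (\<lambda>(p :: nat multiset, S :: nat set). (p - {#k#}, S))"
  have g_mult: "nonoverlined_mult (g y) k = nonoverlined_mult y k + 1"
    if "y \<in> overpartitions (n - k)" for y
  proof -
    obtain p S where y: "y = (p, S)"
      by fastforce
    have "k \<in> S \<Longrightarrow> k \<in># p"
      using that y by (auto simp: mem_overpartitions_iff)
    then show ?thesis
      by (auto simp: nonoverlined_mult_def g_def y)
  qed
  have bij: "bij_betw g (overpartitions (n - k)) {x \<in> overpartitions n. 1 \<le> nonoverlined_mult x k}"
  proof (rule bij_betw_byWitness[where f' = f])
    show "\<forall>a\<in>overpartitions (n - k). f (g a) = a"
      by (auto simp: f_def g_def)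
    show "\<forall>a\<in>{x \<in> overpartitions n. 1 \<le> nonoverlined_mult x k}. g (f a) = a"
    proof
      fix a
      assume "a \<in> {x \<in> overpartitions n. 1 \<le> nonoverlined_mult x k}"
      then obtain p S where a: "a = (p, S)" "1 \<le> nonoverlined_mult (p, S) k"
        by (cases a) auto
      moreover have "nonoverlined_mult (p, S) k \<le> count p k"
        by (simp add: nonoverlined_mult_def)
      ultimately have "count p k \<noteq> 0"
        by linarith
      then have "k \<in># p"
        by (meson count_eq_zero_iff)
      then show "g (f a) = a"
        using a by (auto simp: f_def g_def)
    qed
    show "g ` overpartitions (n - k) \<subseteq> {x \<in> overpartitions n. 1 \<le> nonoverlined_mult x k}"
    proof
      fix x
      assume "x \<in> g ` overpartitions (n - k)"
      then obtain p S where a: "(p, S) \<in> overpartitions (n - k)" "x = g (p, S)"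
        by auto
      have "g (p, S) \<in> overpartitions n"
        using a assms by (auto simp: g_def mem_overpartitions_iff)
      then show "x \<in> {x \<in> overpartitions n. 1 \<le> nonoverlined_mult x k}"
        using g_mult[OF a(1)] a by simp
    qed
    show "f ` {x \<in> overpartitions n. 1 \<le> nonoverlined_mult x k} \<subseteq> overpartitions (n - k)"
    proof
      fix y
      assume "y \<in> f ` {x \<in> overpartitions n. 1 \<le> nonoverlined_mult x k}"
      then obtain p S where a: "(p, S) \<in> overpartitions n" "1 \<le> nonoverlined_mult (p, S) k"
        "y = f (p, S)"
        by auto
      then have c: "count p k \<ge> 1 + (if k \<in> S then 1 else 0)"
        by (auto simp: nonoverlined_mult_def split: if_splits)
      then have "count p k \<noteq> 0"
        by linarith
      then have "k \<in># p"
        by (meson count_eq_zero_iff)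
      then obtain p' where p': "p = add_mset k p'"
        by (blast dest: multi_member_split)
      have "S \<subseteq> set_mset p'"
      proof
        fix s
        assume "s \<in> S"
        show "s \<in># p'"
        proof (cases "s = k")
          case True
          then show ?thesis
            using c p' \<open>s \<in> S\<close> by auto
        next
          case False
          then show ?thesis
            using a(1) p' \<open>s \<in> S\<close> by (auto simp: mem_overpartitions_iff)
        qed
      qed
      then show "y \<in> overpartitions (n - k)"
        using a p' by (auto simp: f_def mem_overpartitions_iff)
    qed
  qed
  have "nonoverlined_count k n =
      (\<Sum>x\<in>{x \<in> overpartitions n. 1 \<le> nonoverlined_mult x k}. nonoverlined_mult x k)"
    unfolding nonoverlined_count_def
    by (rule sum.mono_neutral_right) (auto simp: finite_overpartitions)
  also have "\<dots> = (\<Sum>y\<in>overpartitions (n - k). nonoverlined_mult (g y) k)"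
    using sum.reindex_bij_betw[OF bij, of "\<lambda>x. nonoverlined_mult x k"] by simp
  also have "\<dots> = (\<Sum>y\<in>overpartitions (n - k). nonoverlined_mult y k + 1)"
    by (rule sum.cong) (auto simp: g_mult)
  also have "\<dots> = nonoverlined_count k (n - k) + pbar (n - k)"
    unfolding sum.distrib nonoverlined_count_def pbar_def by simp
  finally show ?thesis .
qed


lemma sum_eq_sum_indicator:
  "finite A \<Longrightarrow> S \<subseteq> A \<Longrightarrow> \<Sum>S = (\<Sum>k\<in>A. k * (if k \<in> S then 1 else 0 :: nat))"
  by (simp add: sum.inter_restrict[symmetric] Int_absorb1 if_distrib cong: if_cong)

lemma overlined_le_count:
  "(p, S) \<in> overpartitions n \<Longrightarrow> k * (if k \<in> S then 1 else 0) \<le> k * count p k"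
  by (auto simp: mem_overpartitions_iff Suc_le_eq)

lemma sum_overlined_le_sum_mset: "(p, S) \<in> overpartitions n \<Longrightarrow> \<Sum>S \<le> sum_mset p"
  using sum_eq_sum_indicator[OF _ overpartitions_overlined] overlined_le_count
    sum_mset_eq_sum_count[OF _ overpartitions_parts]
  by (simp add: sum_mono)

lemma sum_nonoverlined_parts:
  assumes "(p, S) \<in> overpartitions n"
  shows "sum_mset p - \<Sum>S = (\<Sum>k=1..n. k * nonoverlined_mult (p, S) k)"
proof -
  have "sum_mset p - \<Sum>S =
      (\<Sum>k=1..n. k * count p k) - (\<Sum>k=1..n. k * (if k \<in> S then 1 else 0))"
    using sum_mset_eq_sum_count[OF _ overpartitions_parts[OF assms]]
      sum_eq_sum_indicator[OF _ overpartitions_overlined[OF assms]] by simp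
  also have "\<dots> = (\<Sum>k=1..n. k * count p k - k * (if k \<in> S then 1 else 0))"
    using overlined_le_count[OF assms] by (simp add: sum_subtractf_nat)
  also have "\<dots> = (\<Sum>k=1..n. k * nonoverlined_mult (p, S) k)"
    by (rule sum.cong) (auto simp: nonoverlined_mult_def diff_mult_distrib2)
  finally show ?thesis .
qed

lemma nov_eq_sum: "nov n = (\<Sum>k=1..n. k * nonoverlined_count k n)"
proof -
  have "nov n = (\<Sum>x\<in>overpartitions n. \<Sum>k=1..n. k * nonoverlined_mult x k)"
    unfolding nov_def by (rule sum.cong) (auto simp: sum_nonoverlined_parts)
  then show ?thesis
    by (subst (asm) sum.swap) (simp add: nonoverlined_count_def sum_distrib_left)
qed

lemma ov_eq_sum: "ov n = (\<Sum>k=1..n. k * overlined_count k n)"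
proof -
  have "\<Sum>S = (\<Sum>k=1..n. k * (if k \<in> S then 1 else 0))" if "(p, S) \<in> overpartitions n" for p S
    using overpartitions_overlined[OF that] by (simp add: sum_eq_sum_indicator)
  then have "ov n = (\<Sum>x\<in>overpartitions n. \<Sum>k=1..n. k * (if k \<in> snd x then 1 else 0))"
    unfolding ov_def by (intro sum.cong) auto
  then show ?thesis
    by (subst (asm) sum.swap)
      (simp add: sum_distrib_left[symmetric] finite_overpartitions sum.If_cases Int_def
        overlined_count_def)
qed

lemma nov_add_ov: "nov n + ov n = n * pbar n"
proof -
  have "nov n + ov n = (\<Sum>(p, S)\<in>overpartitions n. (sum_mset p - \<Sum>S) + \<Sum>S)"
    by (simp add: nov_def ov_def sum.distrib case_prod_beta)
  also have "\<dots> = (\<Sum>x\<in>overpartitions n. n)"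
    by (rule sum.cong) (auto simp: sum_overlined_le_sum_mset mem_overpartitions_iff)
  finally show ?thesis
    by (simp add: pbar_def)
qed


section \<open>The generating function of overpartitions\<close>

definition fps_theta :: "'a::comm_ring_1 fps \<Rightarrow> 'a fps" where
  "fps_theta f = fps_X * fps_deriv f"

lemma fps_theta_nth [simp]: "fps_theta f $ n = of_nat n * f $ n"
  by (simp add: fps_theta_def fps_mult_fps_X_deriv_shift)

lemma fps_theta_mult: "fps_theta (f * g) = fps_theta f * g + f * fps_theta g"
  by (simp add: fps_theta_def algebra_simps)

lemma fps_theta_prod_one_minus_X_power:
  fixes a :: "nat \<Rightarrow> nat"
  assumes "\<And>j. 0 < a j"
  shows "fps_theta (\<Prod>j<K. 1 - fps_X ^ a j :: 'a::comm_ring_1 fps) =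
    - (\<Prod>j<K. 1 - fps_X ^ a j) * (\<Sum>j<K. of_nat (a j) * lambert (a j))"
proof (induction K)
  case (Suc K)
  define P L where "P = (\<Prod>j<K. 1 - fps_X ^ a j :: 'a fps)"
    and "L = (\<Sum>j<K. of_nat (a j) * lambert (a j) :: 'a fps)"
  have "fps_theta (1 - fps_X ^ a K :: 'a fps) = - (of_nat (a K) * fps_X ^ a K)"
    by (rule fps_ext) simp
  also have "\<dots> = - (of_nat (a K) * lambert (a K) * (1 - fps_X ^ a K))"
    by (simp add: lambert_mult_one_minus_X_power[OF assms] mult.assoc)
  finally have factor: "fps_theta (1 - fps_X ^ a K :: 'a fps) = \<dots>" .
  have "fps_theta (P * (1 - fps_X ^ a K)) = fps_theta P * (1 - fps_X ^ a K) +
      P * fps_theta (1 - fps_X ^ a K)"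
    by (rule fps_theta_mult)
  also have "\<dots> = - (P * (1 - fps_X ^ a K)) * (L + of_nat (a K) * lambert (a K))"
    unfolding factor Suc.IH[folded P_def L_def] by (simp add: algebra_simps)
  finally show ?case
    by (simp add: P_def L_def)
qed (simp add: fps_theta_def)

lemma fps_mult_nth_of_nth_0_eq_0:
  fixes f c :: "'a::comm_ring_1 fps"
  assumes "c $ 0 = 0"
  shows "(f * c) $ k = (\<Sum>i<k. f $ i * c $ (k - i))"
  using assms by (simp add: fps_mult_nth atLeast0AtMost lessThan_Suc_atMost[symmetric])

lemma fps_eq_upto_theta_unique:
  fixes f g c c' :: "'a::field_char_0 fps"
  assumes "fps_eq_upto n (fps_theta f) (f * c)" "fps_eq_upto n (fps_theta g) (g * c')"
    and "fps_eq_upto n c c'" "c $ 0 = 0" "f $ 0 = g $ 0"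
  shows "fps_eq_upto n f g"
proof -
  have c'0: "c' $ 0 = 0"
    using assms(3,4) by (auto simp: fps_eq_upto_def)
  have "k \<le> n \<longrightarrow> f $ k = g $ k" for k
  proof (induction k rule: less_induct)
    case (less k)
    show ?case
    proof (cases k)
      case (Suc k')
      show ?thesis
      proof
        assume "k \<le> n"
        then have "of_nat k * f $ k = (\<Sum>i<k. f $ i * c $ (k - i))"
          using fps_eq_uptoD[OF assms(1)] by (simp add: fps_mult_nth_of_nth_0_eq_0 assms(4))
        also have "\<dots> = (\<Sum>i<k. g $ i * c' $ (k - i))"
          using less \<open>k \<le> n\<close> fps_eq_uptoD[OF assms(3)] by (intro sum.cong) auto
        also have "\<dots> = of_nat k * g $ k"
          using fps_eq_uptoD[OF assms(2)] \<open>k \<le> n\<close> by (simp add: fps_mult_nth_of_nth_0_eq_0 c'0)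
        finally show "f $ k = g $ k"
          using Suc by (simp del: of_nat_Suc)
      qed
    qed (use assms(5) in simp)
  qed
  then show ?thesis
    by (simp add: fps_eq_upto_def)
qed

definition pbar_gf :: "rat fps" where
  "pbar_gf = Abs_fps (\<lambda>n. of_nat (pbar n))"

definition nonoverlined_gf :: "nat \<Rightarrow> rat fps" where
  "nonoverlined_gf k = Abs_fps (\<lambda>n. of_nat (nonoverlined_count k n))"

definition overlined_gf :: "nat \<Rightarrow> rat fps" where
  "overlined_gf k = Abs_fps (\<lambda>n. of_nat (overlined_count k n))"

lemma pbar_gf_nth_0 [simp]: "pbar_gf $ 0 = 1"
  by (simp add: pbar_gf_def pbar_0)

lemma fps_nonzero_of_nth_0: "f $ 0 = 1 \<Longrightarrow> f \<noteq> (0 :: 'a::zero_neq_one fps)"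
  by auto

lemma fps_mult_one_plus_X_power_nth:
  fixes f :: "'a::comm_ring_1 fps"
  shows "(f * (1 + fps_X ^ a)) $ t = f $ t + (if a \<le> t then f $ (t - a) else 0)"
  by (simp add: algebra_simps fps_X_power_mult_right_nth)

lemma nonoverlined_gf_eq:
  assumes "0 < k"
  shows "nonoverlined_gf k = pbar_gf * lambert k"
proof -
  have "nonoverlined_gf k * (1 - fps_X ^ k) = pbar_gf * fps_X ^ k"
    by (rule fps_ext) (use nonoverlined_count_rec[OF assms] nonoverlined_count_eq_0 in
        \<open>simp add: fps_mult_one_minus_X_power_nth fps_X_power_mult_right_nth nonoverlined_gf_def
          pbar_gf_def\<close>)
  also have "\<dots> = pbar_gf * lambert k * (1 - fps_X ^ k)"
    by (simp add: lambert_mult_one_minus_X_power[OF assms] mult.assoc)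
  finally show ?thesis
    using fps_nonzero_of_nth_0[of "1 - fps_X ^ k :: rat fps"] assms by simp
qed

lemma lambert_sub_lambert_double:
  assumes "0 < k"
  shows "(lambert k - 2 * lambert (2 * k)) * (1 + fps_X ^ k) = (fps_X ^ k :: rat fps)"
proof -
  define x where "x = (fps_X ^ k :: rat fps)"
  have XX: "fps_X ^ (2 * k) = x * x"
    by (simp add: x_def mult_2 power_add)
  have l1: "lambert k * (1 - x) = x" and l2: "lambert (2 * k) * (1 - x * x) = x * x"
    using lambert_mult_one_minus_X_power[where 'a = rat, of k, folded x_def]
      lambert_mult_one_minus_X_power[where 'a = rat, of "2 * k", unfolded XX] assms
    by simp_all
  have "((lambert k - 2 * lambert (2 * k)) * (1 + x) - x) * (1 - x) =
      (lambert k * (1 - x)) * (1 + x) - 2 * (lambert (2 * k) * (1 - x * x)) - x * (1 - x)"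
    by (simp add: algebra_simps)
  also have "\<dots> = 0"
    unfolding l1 l2 by (simp add: algebra_simps)
  finally show ?thesis
    using fps_nonzero_of_nth_0[of "1 - x"] assms by (simp add: x_def)
qed

lemma overlined_gf_eq:
  assumes "0 < k"
  shows "overlined_gf k = pbar_gf * (lambert k - 2 * lambert (2 * k))"
proof -
  have "overlined_gf k * (1 + fps_X ^ k) = pbar_gf * fps_X ^ k"
  proof (rule fps_ext)
    fix t
    have "of_nat (overlined_count k t) + of_nat (overlined_count k (t - k)) =
        (of_nat (pbar (t - k)) :: rat)" if "k \<le> t"
      by (simp only: of_nat_add[symmetric] overlined_count_rec[OF assms that])
    then show "(overlined_gf k * (1 + fps_X ^ k)) $ t = (pbar_gf * fps_X ^ k) $ t"
      by (simp add: fps_mult_one_plus_X_power_nth fps_X_power_mult_right_nth overlined_gf_def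
          pbar_gf_def overlined_count_eq_0)
  qed
  also have "\<dots> = pbar_gf * (lambert k - 2 * lambert (2 * k)) * (1 + fps_X ^ k)"
    by (simp add: lambert_sub_lambert_double[OF assms] mult.assoc)
  finally show ?thesis
    using fps_nonzero_of_nth_0[of "1 + fps_X ^ k :: rat fps"] assms by simp
qed


lemma sum_count_extend:
  assumes "n \<le> L" "\<And>k. n < k \<Longrightarrow> c k n = 0"
  shows "(of_nat (\<Sum>k=1..n. k * c k n) :: 'a::comm_semiring_1) = (\<Sum>k=1..L. of_nat k * of_nat (c k n))"
  unfolding of_nat_sum of_nat_mult
  by (rule sum.mono_neutral_left) (use assms in auto)

lemma of_nat_nov_eq:
  assumes "n \<le> L"
  shows "of_nat (nov n) = (pbar_gf * lambert_sum 1 L) $ n"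
proof -
  have "of_nat (nov n) = (\<Sum>k=1..L. of_nat k * of_nat (nonoverlined_count k n) :: rat)"
    unfolding nov_eq_sum by (rule sum_count_extend[OF assms nonoverlined_count_eq_0])
  also have "\<dots> = (\<Sum>k=1..L. of_nat k * nonoverlined_gf k) $ n"
    by (simp add: fps_sum_nth nonoverlined_gf_def)
  also have "(\<Sum>k=1..L. of_nat k * nonoverlined_gf k) = pbar_gf * lambert_sum 1 L"
    unfolding lambert_sum_def sum_distrib_left by (rule sum.cong) (simp_all add: nonoverlined_gf_eq)
  finally show ?thesis .
qed

lemma of_nat_ov_eq:
  assumes "n \<le> L"
  shows "of_nat (ov n) = (pbar_gf * (lambert_sum 1 L - 2 * lambert_sum 2 L)) $ n"
proof -
  have "of_nat (ov n) = (\<Sum>k=1..L. of_nat k * of_nat (overlined_count k n) :: rat)"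
    unfolding ov_eq_sum by (rule sum_count_extend[OF assms overlined_count_eq_0])
  also have "\<dots> = (\<Sum>k=1..L. of_nat k * overlined_gf k) $ n"
    by (simp add: fps_sum_nth overlined_gf_def)
  also have "(\<Sum>k=1..L. of_nat k * overlined_gf k) = pbar_gf * (lambert_sum 1 L - 2 * lambert_sum 2 L)"
    unfolding lambert_sum_def sum_distrib_left sum_subtractf[symmetric]
    by (rule sum.cong) (simp_all add: overlined_gf_eq algebra_simps)
  finally show ?thesis .
qed

lemma fps_theta_pbar_gf_eq_upto:
  assumes "n \<le> L"
  shows "fps_eq_upto n (fps_theta pbar_gf) (pbar_gf * (2 * lambert_sum 1 L - 2 * lambert_sum 2 L))"
  unfolding fps_eq_upto_def
proof (intro allI impI)
  fix t
  assume "t \<le> n"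
  then have "fps_theta pbar_gf $ t = of_nat (nov t) + of_nat (ov t)"
    by (simp add: pbar_gf_def flip: of_nat_mult of_nat_add nov_add_ov)
  also have "\<dots> = (pbar_gf * lambert_sum 1 L + pbar_gf * (lambert_sum 1 L - 2 * lambert_sum 2 L)) $ t"
    using \<open>t \<le> n\<close> assms of_nat_nov_eq[of t L] of_nat_ov_eq[of t L] by simp
  also have "pbar_gf * lambert_sum 1 L + pbar_gf * (lambert_sum 1 L - 2 * lambert_sum 2 L) =
      pbar_gf * (2 * lambert_sum 1 L - 2 * lambert_sum 2 L)"
    by (simp add: algebra_simps)
  finally show "fps_theta pbar_gf $ t = (pbar_gf * (2 * lambert_sum 1 L - 2 * lambert_sum 2 L)) $ t" .
qed


section \<open>The crank functions at \<open>z = 1\<close>\<close>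

lemma qpoch_X_eq: "qpoch fps_X 1 K = (\<Prod>j<K. 1 - fps_X ^ Suc j :: 'a::comm_ring_1 fps)"
  by (simp add: qpoch_def flip: power_Suc)

lemma qpoch_X_sq_eq: "qpoch (fps_X\<^sup>2) 2 K = (\<Prod>j<K. 1 - fps_X ^ (2 * Suc j) :: 'a::comm_ring_1 fps)"
  by (simp add: qpoch_def flip: power_add)

lemma lambert_sum_lessThan:
  "lambert_sum d K = (\<Sum>j<K. of_nat (Suc j) * lambert (d * Suc j) :: 'a::comm_ring_1 fps)"
  unfolding lambert_sum_def by (rule sum_bounds_lt_plus1[symmetric])

lemma fps_theta_qpoch_X:
  "fps_theta (qpoch fps_X 1 K :: 'a::comm_ring_1 fps) = - qpoch fps_X 1 K * lambert_sum 1 K"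
proof -
  have "fps_theta (\<Prod>j<K. 1 - fps_X ^ Suc j :: 'a fps) =
      - (\<Prod>j<K. 1 - fps_X ^ Suc j) * (\<Sum>j<K. of_nat (Suc j) * lambert (Suc j))"
    by (rule fps_theta_prod_one_minus_X_power) simp
  then show ?thesis
    unfolding qpoch_X_eq lambert_sum_lessThan by simp
qed

lemma fps_theta_qpoch_X_sq:
  "fps_theta (qpoch (fps_X\<^sup>2) 2 K :: 'a::comm_ring_1 fps) =
    - qpoch (fps_X\<^sup>2) 2 K * (2 * lambert_sum 2 K)"
proof -
  have "fps_theta (\<Prod>j<K. 1 - fps_X ^ (2 * Suc j) :: 'a fps) =
      - (\<Prod>j<K. 1 - fps_X ^ (2 * Suc j)) * (\<Sum>j<K. of_nat (2 * Suc j) * lambert (2 * Suc j))"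
    by (rule fps_theta_prod_one_minus_X_power) simp
  moreover have "(\<Sum>j<K. of_nat (2 * Suc j) * lambert (2 * Suc j) :: 'a fps) = 2 * lambert_sum 2 K"
    by (simp add: lambert_sum_lessThan sum_distrib_left algebra_simps)
  ultimately show ?thesis
    unfolding qpoch_X_sq_eq by simp
qed

lemma qpoch_X_sq_factor:
  "qpoch (fps_X\<^sup>2) 2 K = qpoch (- fps_X) 1 K * (qpoch fps_X 1 K :: 'a::comm_ring_1 fps)"
proof -
  have factor: "(1 - (- fps_X) * fps_X ^ (1 * j)) * (1 - fps_X * fps_X ^ (1 * j)) =
    (1 - fps_X\<^sup>2 * fps_X ^ (2 * j) :: 'a fps)" for j
  proof -
    have "fps_X ^ (2 * j) = fps_X ^ j * (fps_X ^ j :: 'a fps)"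
      by (simp only: mult_2 power_add)
    then have "fps_X\<^sup>2 * fps_X ^ (2 * j) = (fps_X * fps_X ^ j) * (fps_X * fps_X ^ j :: 'a fps)"
      by (simp only: power2_eq_square mult_ac)
    then show ?thesis
      by (simp add: algebra_simps)
  qed
  show ?thesis
    unfolding qpoch_def prod.distrib[symmetric] by (intro prod.cong refl factor[symmetric])
qed

lemma qpoch_X_double:
  "qpoch fps_X 1 (2 * K) = qpoch fps_X 2 K * (qpoch (fps_X\<^sup>2) 2 K :: 'a::comm_ring_1 fps)"
proof (induction K)
  case (Suc K)
  have "qpoch fps_X 1 (2 * Suc K) =
      qpoch fps_X 1 (2 * K) * (1 - fps_X * fps_X ^ (2 * K)) * (1 - fps_X\<^sup>2 * fps_X ^ (2 * K))"
    by (simp add: qpoch_Suc power2_eq_square mult.assoc)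
  then show ?case
    using Suc.IH by (simp add: qpoch_Suc power2_eq_square mult_ac)
qed simp

lemma pbar_trunc1_eq_upto:
  assumes "n < K"
  shows "fps_eq_upto n (qpoch (fps_X\<^sup>2) 2 K / (qpoch fps_X 1 (2 * K))\<^sup>2) pbar_gf"
proof -
  define A B where "A = (qpoch (fps_X\<^sup>2) 2 K :: rat fps)" and "B = (qpoch fps_X 1 (2 * K) :: rat fps)"
  define F where "F = A / B\<^sup>2"
  define c where "c = (2 * lambert_sum 1 (2 * K) - 2 * lambert_sum 2 K :: rat fps)"
  have B0: "B $ 0 = 1" and B: "B \<noteq> 0"
    by (simp_all add: B_def fps_nonzero_of_nth_0)
  have "(B\<^sup>2) $ 0 = 1"
    using B0 by (simp add: power2_eq_square)
  then have FB: "F * B\<^sup>2 = A"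
    by (simp add: F_def fps_divide_unit mult.assoc inverse_mult_eq_1)
  have "fps_theta F * B\<^sup>2 = fps_theta A - F * fps_theta (B\<^sup>2)"
    using arg_cong[OF FB, of fps_theta] by (simp add: fps_theta_mult eq_diff_eq)
  also have "\<dots> = F * c * B\<^sup>2"
  proof -
    have "fps_theta A = - A * (2 * lambert_sum 2 K)"
      by (simp add: A_def fps_theta_qpoch_X_sq)
    moreover have "fps_theta (B\<^sup>2) = - 2 * B\<^sup>2 * lambert_sum 1 (2 * K)"
      unfolding B_def power2_eq_square fps_theta_mult fps_theta_qpoch_X by (simp add: algebra_simps)
    ultimately show ?thesis
      unfolding FB[symmetric] c_def by (simp add: algebra_simps)
  qed
  finally have theta_F: "fps_theta F = F * c"
    using B by simp
  have c: "fps_eq_upto n c (2 * lambert_sum 1 (2 * K) - 2 * lambert_sum 2 (2 * K))"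
    unfolding c_def using assms
    by (intro fps_eq_upto_diff fps_eq_upto_mult fps_eq_upto_refl lambert_sum_eq_upto) simp_all
  have "F $ 0 = 1"
    using B0 by (simp add: F_def A_def fps_divide_unit power2_eq_square)
  then have "fps_eq_upto n F pbar_gf"
    using theta_F c assms fps_theta_pbar_gf_eq_upto[of n "2 * K"]
    by (intro fps_eq_upto_theta_unique[of n F c]) (simp_all add: c_def)
  then show ?thesis
    by (simp add: F_def A_def B_def)
qed


lemma qpoch_X_eq_upto:
  assumes "n < N" "n < M"
  shows "fps_eq_upto n (qpoch fps_X 1 N) (qpoch fps_X 1 M :: 'a::comm_ring_1 fps)"
  unfolding qpoch_X_eq using assms by (intro fps_prod_eq_upto) auto

lemma pbar_trunc2_eq_upto:
  assumes "n < K"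
  shows "fps_eq_upto n (qpoch (- fps_X) 1 K * qpoch (fps_X\<^sup>2) 2 K /
    (qpoch fps_X 2 K * (qpoch (fps_X\<^sup>2) 2 K)\<^sup>2)) pbar_gf"
proof -
  define Q P R S D where "Q = (qpoch (- fps_X) 1 K :: rat fps)" and "P = (qpoch fps_X 1 K :: rat fps)"
    and "R = (qpoch fps_X 2 K :: rat fps)" and "S = (qpoch (fps_X\<^sup>2) 2 K :: rat fps)"
    and "D = (qpoch fps_X 1 (2 * K) :: rat fps)"
  define F G where "F = S / D\<^sup>2" and "G = Q * S / (R * S\<^sup>2)"
  have D: "D = R * S"
    unfolding D_def R_def S_def by (rule qpoch_X_double)
  have S: "S = Q * P"
    unfolding S_def Q_def P_def by (rule qpoch_X_sq_factor)
  have nonzero: "S \<noteq> 0" "D \<noteq> 0" "P \<noteq> 0"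
    by (simp_all add: S_def D_def P_def fps_nonzero_of_nth_0)
  have "(R * S\<^sup>2) $ 0 = 1" "(D\<^sup>2) $ 0 = 1"
    by (simp_all add: R_def S_def D_def power2_eq_square)
  then have G: "G * (R * S\<^sup>2) = Q * S" and F: "F * D\<^sup>2 = S"
    by (simp_all add: F_def G_def fps_divide_unit mult.assoc inverse_mult_eq_1)
  have "G * D * S = Q * S"
    using G by (simp add: D power2_eq_square mult_ac)
  then have GD: "G * D = Q"
    using nonzero by simp
  have "F * D * D = G * P * D"
    using F by (simp add: power2_eq_square S flip: GD)
  then have "G * P = F * D"
    using nonzero by simp
  moreover have "fps_eq_upto n (F * D) (F * P)"
    unfolding D_def P_def using assms by (intro fps_eq_upto_mult fps_eq_upto_refl qpoch_X_eq_upto) simp_all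
  ultimately have "fps_eq_upto n G F"
    by (intro fps_eq_upto_mult_cancel[of n G P F]) (simp_all add: P_def)
  moreover have "fps_eq_upto n F pbar_gf"
    unfolding F_def S_def D_def using assms by (rule pbar_trunc1_eq_upto)
  ultimately show ?thesis
    unfolding G_def Q_def S_def R_def by (rule fps_eq_upto_trans)
qed


theorem proposition4p1:
  fixes n :: nat
  shows "of_nat (nov n) = Mbar_2 n / 2 \<and> of_nat (ov n) = Mbar_2 n / 2 - M2bar_2 n"
proof -
  define K where "K = Suc n"
  define F G :: "rat fps"
    where "F = qpoch (fps_X\<^sup>2) 2 K / (qpoch fps_X 1 (2 * K))\<^sup>2"
      and "G = qpoch (- fps_X) 1 K * qpoch (fps_X\<^sup>2) 2 K /
        (qpoch fps_X 2 K * (qpoch (fps_X\<^sup>2) 2 K)\<^sup>2)"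
  have K: "n < K" "n < 2 * K"
    by (simp_all add: K_def)
  have "fps_eq_upto n (pbar_gf * lambert_sum 1 (2 * K)) (F * lambert_sq_sum 1 (2 * K))"
    unfolding F_def using K
    by (intro fps_eq_upto_mult fps_eq_upto_sym[OF pbar_trunc1_eq_upto]
        lambert_sum_eq_upto_lambert_sq_sum) simp_all
  then have nov: "of_nat (nov n) = Mbar_2 n / 2"
    using of_nat_nov_eq[of n "2 * K"] Mbar_2_eq[OF K] K by (simp add: F_def fps_eq_uptoD)
  have "fps_eq_upto n (pbar_gf * lambert_sum 2 (2 * K)) (G * lambert_sq_sum 2 K)"
    unfolding G_def using K
    by (intro fps_eq_upto_mult fps_eq_upto_sym[OF pbar_trunc2_eq_upto]
        lambert_sum_eq_upto_lambert_sq_sum) simp_all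
  then have "(pbar_gf * lambert_sum 2 (2 * K)) $ n = M2bar_2 n / 2"
    using M2bar_2_eq[OF K(1)] by (simp add: G_def fps_eq_uptoD)
  moreover have "of_nat (ov n) =
      (pbar_gf * lambert_sum 1 (2 * K)) $ n - 2 * (pbar_gf * lambert_sum 2 (2 * K)) $ n"
    using of_nat_ov_eq[of n "2 * K"] K by (simp add: right_diff_distrib mult.left_commute[of pbar_gf])
  ultimately show ?thesis
    using nov of_nat_nov_eq[of n "2 * K"] K by simp
qed

end
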